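(* Let $D$ be an orthogonal design of order $n$ and type $(s_1,\ldots,s_u)$ in variables $x_1,\ldots,x_u$ with $i$-th column $d_i$, let $W$ be a weighing matrix of order $n$ and weight $k$ with $i$-th column $w_i$, and put $C_i=w_id_i^\top$ for $i\in\{1,\ldots,n\}$. Let $L=(l(i,j))_{i,j=1}^n$ be a Latin square of order $n$ on the symbols $\{1,\ldots,n\}$. Then the $n^2\times n^2$ block matrix $\tilde D=(C_{l(i,j)})_{i,j=1}^n$ is an orthogonal design of order $n^2$ and type $(ks_1,\ldots,ks_u)$.
   Context: A weighing matrix of order $n$ and weight $k$ is an $n\times n$ $(0,1,-1)$-matrix $W$ with $WW^\top=kI_n$. An orthogonal design of order $n$ and type $(s_1,\ldots,s_u)$ in distinct commuting real indeterminates $x_1,\ldots,x_u$ is an $n\times n$ matrix $D$ with entries in $\{0,\pm x_1,\ldots,\pm x_u\}$ such that $DD^\top=(s_1x_1^2+\cdots+s_ux_u^2)I_n$. *)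

theory Defs
  imports Complex_Main
begin

text \<open>Matrices of order n are functions nat => nat => _ with indices in {0..<n}.
  An entry of an orthogonal design in variables x_1,...,x_u is encoded by an integer e
  with |e| <= u: e = 0 encodes the entry 0, e = t > 0 encodes +x_t and e = -t encodes -x_t.\<close>

definition od_eval :: "(nat \<Rightarrow> real) \<Rightarrow> int \<Rightarrow> real" where
  "od_eval x e = (if e = 0 then 0 else of_int (sgn e) * x (nat \<bar>e\<bar>))"

text \<open>Orthogonal design of order n and type (s_1,...,s_u): the identity D D^T = (sum s_t x_t^2) I
  holds identically in the commuting real indeterminates x_1,...,x_u, i.e. for all real values.\<close>
definition orthogonal_design ::
  "nat \<Rightarrow> nat \<Rightarrow> (nat \<Rightarrow> nat) \<Rightarrow> (nat \<Rightarrow> nat \<Rightarrow> int) \<Rightarrow> bool" where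
  "orthogonal_design n u s D \<longleftrightarrow>
     (\<forall>i<n. \<forall>j<n. \<bar>D i j\<bar> \<le> int u) \<and>
     (\<forall>x :: nat \<Rightarrow> real. \<forall>i<n. \<forall>j<n.
        (\<Sum>l<n. od_eval x (D i l) * od_eval x (D j l)) =
        (if i = j then (\<Sum>t\<in>{1..u}. real (s t) * (x t)\<^sup>2) else 0))"

definition weighing_matrix :: "nat \<Rightarrow> nat \<Rightarrow> (nat \<Rightarrow> nat \<Rightarrow> int) \<Rightarrow> bool" where
  "weighing_matrix n k W \<longleftrightarrow>
     (\<forall>i<n. \<forall>j<n. W i j \<in> {-1, 0, 1}) \<and>
     (\<forall>i<n. \<forall>j<n. (\<Sum>l<n. W i l * W j l) = (if i = j then int k else 0))"

text \<open>Latin square of order n on the symbols {0..<n} (0-based version of {1..n}).\<close>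
definition latin_square :: "nat \<Rightarrow> (nat \<Rightarrow> nat \<Rightarrow> nat) \<Rightarrow> bool" where
  "latin_square n L \<longleftrightarrow>
     (\<forall>i<n. bij_betw (\<lambda>j. L i j) {..<n} {..<n}) \<and>
     (\<forall>j<n. bij_betw (\<lambda>i. L i j) {..<n} {..<n})"

text \<open>Since W a m is in {-1,0,1}, the integer product is exactly the
  encoding of the entry W a m * (entry of D).\<close>
definition col_prod :: "(nat \<Rightarrow> nat \<Rightarrow> int) \<Rightarrow> (nat \<Rightarrow> nat \<Rightarrow> int) \<Rightarrow> nat \<Rightarrow> nat \<Rightarrow> nat \<Rightarrow> int" where
  "col_prod W D m a b = W a m * D b m"

definition latin_block :: "nat \<Rightarrow> (nat \<Rightarrow> nat \<Rightarrow> nat) \<Rightarrow> (nat \<Rightarrow> nat \<Rightarrow> int) \<Rightarrow>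
    (nat \<Rightarrow> nat \<Rightarrow> int) \<Rightarrow> nat \<Rightarrow> nat \<Rightarrow> int" where
  "latin_block n L W D r c =
     col_prod W D (L (r div n) (c div n)) (r mod n) (c mod n)"

end

theory Submission
  imports Defs "Jordan_Normal_Form.Determinant"
begin

text \<open>Write row i*n+a of the block matrix as the pair (i,a).  Summing over the block columns
  (j,b), the entries W a (L i j) and W a' (L i' j) factor out of the sum over b, which is then an
  inner product of the columns L i j and L i' j of D.  Since D D^T = S I forces D^T D = S I, only
  the blocks with L i j = L i' j survive.  If i \<noteq> i' there are none, the symbols of a column of L
  being distinct; if i = i' every block survives, and as L i j runs over all symbols the remaining
  sum is the inner product of rows a and a' of W, i.e. k if a = a' and 0 otherwise.\<close>

lemma rows_orthogonal_imp_columns_orthogonal: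
  fixes f :: "nat \<Rightarrow> nat \<Rightarrow> real"
  assumes rows: "\<And>i j. i < n \<Longrightarrow> j < n \<Longrightarrow> (\<Sum>l<n. f i l * f j l) = (if i = j then c else 0)"
    and "i < n" "j < n"
  shows "(\<Sum>l<n. f l i * f l j) = (if i = j then c else 0)"
proof (cases "c = 0")
  case True
  have zero: "f a b = 0" if "a < n" "b < n" for a b
  proof -
    have "(\<Sum>l<n. (f a l)\<^sup>2) = 0" using rows[of a a] that True by (simp add: power2_eq_square)
    then have "\<forall>l\<in>{..<n}. (f a l)\<^sup>2 = 0" by (subst sum_nonneg_eq_0_iff[symmetric]) auto
    then show ?thesis using that by auto
  qed
  show ?thesis using zero assms(2,3) True by simp
next
  case False
  define A where "A = mat n n (\<lambda>(a, b). f a b)"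
  define B where "B = mat n n (\<lambda>(a, b). f b a / c)"
  have A: "A \<in> carrier_mat n n" and B: "B \<in> carrier_mat n n" by (auto simp: A_def B_def)
  have "A * B = 1\<^sub>m n"
  proof (rule eq_matI)
    fix a b assume ab: "a < dim_row (1\<^sub>m n :: real mat)" "b < dim_col (1\<^sub>m n :: real mat)"
    have "(A * B) $$ (a, b) = (\<Sum>l<n. f a l * f b l) / c"
      using ab by (simp add: A_def B_def scalar_prod_def sum_divide_distrib lessThan_atLeast0)
    also have "\<dots> = 1\<^sub>m n $$ (a, b)" using ab rows[of a b] False by simp
    finally show "(A * B) $$ (a, b) = 1\<^sub>m n $$ (a, b)" .
  qed (auto simp: A_def B_def)
  then have "B * A = 1\<^sub>m n" using mat_mult_left_right_inverse[OF A B] by blast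
  moreover have "(B * A) $$ (i, j) = (\<Sum>l<n. f l i * f l j) / c"
    using assms(2,3)
    by (simp add: A_def B_def scalar_prod_def sum_divide_distrib lessThan_atLeast0 mult.commute)
  ultimately have "(\<Sum>l<n. f l i * f l j) / c = (if i = j then 1 else 0)" using assms(2,3) by simp
  then show ?thesis using False by (auto split: if_splits simp: field_simps)
qed

lemma orthogonal_design_columns:
  assumes "orthogonal_design n u s D" "i < n" "j < n"
  shows "(\<Sum>l<n. od_eval x (D l i) * od_eval x (D l j)) =
    (if i = j then (\<Sum>t\<in>{1..u}. real (s t) * (x t)\<^sup>2) else 0)"
  using assms unfolding orthogonal_design_def
  by (intro rows_orthogonal_imp_columns_orthogonal[where f = "\<lambda>a b. od_eval x (D a b)"]) blast+

lemma sum_lessThan_mult_blocks: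
  fixes g :: "nat \<Rightarrow> 'a :: comm_monoid_add"
  shows "(\<Sum>c<n * n. g c) = (\<Sum>j<n. \<Sum>b<n. g (j * n + b))"
proof -
  have "(\<Sum>c<n * n. g c) = (\<Sum>j<n. sum g {j * n..<j * n + n})" by (rule sum.nat_group[symmetric])
  also have "\<dots> = (\<Sum>j<n. \<Sum>b<n. g (j * n + b))"
  proof (rule sum.cong[OF refl])
    fix j
    have "sum g {0 + j * n..<n + j * n} = (\<Sum>b\<in>{0..<n}. g (b + j * n))"
      by (rule sum.shift_bounds_nat_ivl)
    then show "sum g {j * n..<j * n + n} = (\<Sum>b<n. g (j * n + b))"
      by (simp add: add.commute lessThan_atLeast0)
  qed
  finally show ?thesis .
qed

lemma od_eval_sign_mult:
  assumes "w \<in> {-1, 0, 1}"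
  shows "od_eval x (w * e) = of_int w * od_eval x e"
  using assms by (auto simp: od_eval_def sgn_mult abs_mult)

lemma latin_square_less:
  assumes "latin_square n L" "i < n" "j < n"
  shows "L i j < n"
  using assms unfolding latin_square_def by (meson bij_betwE lessThan_iff)

lemma latin_square_column_inj:
  assumes "latin_square n L" "i < n" "i' < n" "j < n" "L i j = L i' j"
  shows "i = i'"
  using assms unfolding latin_square_def by (meson bij_betw_imp_inj_on inj_onD lessThan_iff)

lemma weighing_matrix_rows_permuted:
  assumes "weighing_matrix n k W" "latin_square n L" "i < n" "a < n" "a' < n"
  shows "(\<Sum>j<n. W a (L i j) * W a' (L i j)) = (if a = a' then int k else 0)"
proof -
  have "bij_betw (L i) {..<n} {..<n}" using assms(2,3) unfolding latin_square_def by blast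
  then have "(\<Sum>j<n. W a (L i j) * W a' (L i j)) = (\<Sum>m<n. W a m * W a' m)"
    by (rule sum.reindex_bij_betw)
  then show ?thesis using assms(1,4,5) unfolding weighing_matrix_def by simp
qed

lemma latin_block_block_entry:
  assumes "a < n" "b < n"
  shows "latin_block n L W D (i * n + a) (j * n + b) = W a (L i j) * D b (L i j)"
  using assms by (simp add: latin_block_def col_prod_def)

lemma latin_block_rows_inner:
  fixes x :: "nat \<Rightarrow> real"
  assumes OD: "orthogonal_design n u s D" and WM: "weighing_matrix n k W"
    and LS: "latin_square n L"
    and "i < n" "a < n" "i' < n" "a' < n"
  defines "S \<equiv> \<Sum>t\<in>{1..u}. real (s t) * (x t)\<^sup>2"
  shows "(\<Sum>c<n * n. od_eval x (latin_block n L W D (i * n + a) c) *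
                     od_eval x (latin_block n L W D (i' * n + a') c)) =
    (\<Sum>j<n. of_int (W a (L i j) * W a' (L i' j)) * (if L i j = L i' j then S else 0))"
proof -
  have eval_W_mult: "od_eval x (W p q * e) = of_int (W p q) * od_eval x e"
    if "p < n" "q < n" for p q e
    using WM that unfolding weighing_matrix_def by (blast intro: od_eval_sign_mult)
  have "(\<Sum>c<n * n. od_eval x (latin_block n L W D (i * n + a) c) *
                    od_eval x (latin_block n L W D (i' * n + a') c))
      = (\<Sum>j<n. \<Sum>b<n. od_eval x (latin_block n L W D (i * n + a) (j * n + b)) *
                        od_eval x (latin_block n L W D (i' * n + a') (j * n + b)))"
    by (rule sum_lessThan_mult_blocks)
  also have "\<dots> = (\<Sum>j<n. of_int (W a (L i j) * W a' (L i' j)) *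
                   (\<Sum>b<n. od_eval x (D b (L i j)) * od_eval x (D b (L i' j))))"
    using assms(4-7)
    by (auto intro!: sum.cong simp: sum_distrib_left latin_block_block_entry eval_W_mult
        latin_square_less[OF LS])
  also have "\<dots> = (\<Sum>j<n. of_int (W a (L i j) * W a' (L i' j)) * (if L i j = L i' j then S else 0))"
    using assms(4,6) unfolding S_def
    by (intro sum.cong refl) (simp add: orthogonal_design_columns[OF OD] latin_square_less[OF LS])
  finally show ?thesis .
qed

lemma latin_block_rows_orthogonal:
  fixes x :: "nat \<Rightarrow> real"
  assumes OD: "orthogonal_design n u s D" and WM: "weighing_matrix n k W"
    and LS: "latin_square n L"
    and "i < n" "a < n" "i' < n" "a' < n"
  shows "(\<Sum>c<n * n. od_eval x (latin_block n L W D (i * n + a) c) *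
                     od_eval x (latin_block n L W D (i' * n + a') c)) =
    (if i = i' \<and> a = a' then (\<Sum>t\<in>{1..u}. real (k * s t) * (x t)\<^sup>2) else 0)"
proof (cases "i = i'")
  case True
  define S where "S = (\<Sum>t\<in>{1..u}. real (s t) * (x t)\<^sup>2)"
  have "(\<Sum>j<n. of_int (W a (L i j) * W a' (L i j)) * S) = of_int (\<Sum>j<n. W a (L i j) * W a' (L i j)) * S"
    by (simp add: sum_distrib_right)
  also have "\<dots> = (if a = a' then real k * S else 0)"
    using assms(4,5,7) by (simp add: weighing_matrix_rows_permuted[OF WM LS])
  finally show ?thesis
    using True latin_block_rows_inner[OF OD WM LS assms(4-7), of x]
    by (simp add: S_def sum_distrib_left mult.assoc)
next
  case False
  then have "L i j \<noteq> L i' j" if "j < n" for j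
    using latin_square_column_inj[OF LS assms(4,6) that] by blast
  then show ?thesis
    using False latin_block_rows_inner[OF OD WM LS assms(4-7), of x] by simp
qed

lemma less_square_cases:
  assumes "r < n * (n :: nat)"
  obtains i a where "i < n" "a < n" "r = i * n + a"
proof
  have "n > 0" using assms by (cases n) auto
  then show "r div n < n" "r mod n < n" using assms by (auto simp: div_less_iff_less_mult)
qed simp

theorem lemma3p10:
  fixes n u k :: nat and s :: "nat \<Rightarrow> nat"
    and D W :: "nat \<Rightarrow> nat \<Rightarrow> int" and L :: "nat \<Rightarrow> nat \<Rightarrow> nat"
  assumes "orthogonal_design n u s D"
    and "weighing_matrix n k W"
    and "latin_square n L"
  shows "orthogonal_design (n * n) u (\<lambda>t. k * s t) (latin_block n L W D)"
  unfolding orthogonal_design_def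
proof (intro conjI allI impI)
  fix r c assume "r < n * n" "c < n * n"
  then obtain i a j b where ij: "i < n" "a < n" "j < n" "b < n"
    and rc: "r = i * n + a" "c = j * n + b" by (metis less_square_cases)
  have "W a (L i j) \<in> {-1, 0, 1}" "\<bar>D b (L i j)\<bar> \<le> int u"
    using assms ij latin_square_less[OF assms(3) ij(1,3)]
    unfolding orthogonal_design_def weighing_matrix_def by blast+
  then show "\<bar>latin_block n L W D r c\<bar> \<le> int u"
    using rc ij by (auto simp: latin_block_block_entry abs_mult)
next
  fix x :: "nat \<Rightarrow> real" and r r' assume "r < n * n" "r' < n * n"
  then obtain i a i' a' where ij: "i < n" "a < n" "i' < n" "a' < n"
    and rr: "r = i * n + a" "r' = i' * n + a'" by (metis less_square_cases)
  have "r div n = i" "r mod n = a" "r' div n = i'" "r' mod n = a'"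
    using rr ij by auto
  then have "r = r' \<longleftrightarrow> i = i' \<and> a = a'"
    using rr by auto
  then show "(\<Sum>c<n * n. od_eval x (latin_block n L W D r c) * od_eval x (latin_block n L W D r' c)) =
      (if r = r' then \<Sum>t\<in>{1..u}. real (k * s t) * (x t)\<^sup>2 else 0)"
    using latin_block_rows_orthogonal[OF assms ij] rr by simp
qed

end
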